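(* Let $D$ denote the set of variable network games $(v,\rho)\in\mathbb V^N\times\mathbb P^N$ such that $v$ is component additive. Then: (i) the Expected Myerson Value $\Psi^m$ is an allocation rule on the class of variable network games which, on $D$, satisfies component balance and the equal bargaining power property; and (ii) if $\Psi\colon\mathbb V^N\times\mathbb P^N\to\mathbb R^N$ is any allocation rule on the class of variable network games satisfying component balance and the equal bargaining power property for all $(v,\rho)\in D$, then $\Psi(v,\rho)=\Psi^m(v,\rho)$ for all $(v,\rho)\in D$. That is, $\Psi^m$ is the unique allocation rule on the class of component additive variable network games that satisfies component balance and the equal bargaining power property.
   Context: $N=\{1,\dots,n\}$ is a finite player set. A link is an unordered pair $ij=\{i,j\}$ of distinct players; $g_N$ is the set of all links; a network is any $g\subseteq g_N$; $\mathbb G^N$ is the set of all networks and $g_0=\varnothing$. For $g\in\mathbb G^N$: $N_i(g)=\{j\ne i: ij\in g\}$, $N(g)=\bigcup_i N_i(g)$ (players with at least one link in $g$), and $N_0(g)=N\setminus N(g)$ (isolated players). For $S\subseteq N$, $g|S=\{ij\in g: i,j\in S\}$. $g+ij=g\cup\{ij\}$, $g-ij=g\setminus\{ij\}$. A component of $g$ is a nonempty subnetwork $h\subseteq g$ that is connected (any two players of $N(h)$ are joined by a path in $h$) and maximal (if $i\in N(h)$ and $ij\in g$ then $ij\in h$); $C(g)$ is the set of components of $g$. A network formation probability distribution is a map $\rho\colon\mathbb G^N\to[0,1]$ with $\sum_{g}\rho(g)=1$; $\mathbb P^N$ is the set of these. $\mathbb G(\rho)=\{g:\rho(g)>0\}$,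 and the extent is $g(\rho)=\bigcup_{g\in\mathbb G(\rho)}g$. For a network $g$, the restriction $\rho_g\in\mathbb P^N$ is $\rho_g(h)=\sum_{h'\subseteq g_N\setminus g}\rho(h\cup h')$ if $h\subseteq g$ and $\rho_g(h)=0$ otherwise. For a link $ij$, $\rho^{-ij}=\rho_{g_N-ij}$. A network game is $v\colon\mathbb G^N\to\mathbb R$ with $v(\varnothing)=0$; $\mathbb V^N$ is the set of these. $v$ is component additive if $v(g)=\sum_{h\in C(g)}v(h)$ for all $g$. A variable network game is a pair $(v,\rho)\in\mathbb V^N\times\mathbb P^N$. An allocation rule on the class of variable network games is a map $\Psi\colon\mathbb V^N\times\mathbb P^N\to\mathbb R^N$ with $\Psi_i(v,\rho)=0$ for every $i\in N_0(g(\rho))$. It is component balanced (on $(v,\rho)$ with $v$ component additive) if for every component $h\in C(g(\rho))$: $\sum_{i\in N(h)}\Psi_i(v,\rho)=\sum_{g\in\mathbb G(\rho)}\rho(g)\,v(g\cap h)$. It satisfies the equal bargaining power property if for every link $ij\in g(\rho)$: $\Psi_i(v,\rho)-\Psi_i(v,\rho^{-ij})=\Psi_j(v,\rho)-\Psi_j(v,\rho^{-ij})$. The Myerson Value for network games is $Y^m_i(v,g)=\sum_{S\subseteq N\setminus\{i\}}\frac{\#S!\,(n-\#S-1)!}{n!}\,[v(g|(S\cup\{i\}))-v(g|S)]$. The Expected Myerson Value is $\Psi^m(v,\rho)=\sum_{g\in\mathbb G^N}\rho(g)\,Y^m(v,g)$. *)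

theory Defs
  imports Complex_Main
begin

text \<open>Players: the elements of a finite type 'n (the player set N is UNIV, n = card (UNIV :: 'n set)).\<close>

type_synonym 'n network = "'n set set"

definition is_link :: "'n set \<Rightarrow> bool" where
  "is_link l \<longleftrightarrow> (\<exists>i j. i \<noteq> j \<and> l = {i, j})"

definition gN :: "'n network" where
  "gN = {l. is_link l}"

definition networks :: "'n network set" where
  "networks = Pow gN"

definition Nbrs :: "'n network \<Rightarrow> 'n \<Rightarrow> 'n set" where
  "Nbrs g i = {j. j \<noteq> i \<and> {i, j} \<in> g}"

definition players :: "'n network \<Rightarrow> 'n set" where
  "players g = (\<Union>i. Nbrs g i)"

definition isolated :: "'n network \<Rightarrow> 'n set" where
  "isolated g = UNIV - players g"

definition restr :: "'n network \<Rightarrow> 'n set \<Rightarrow> 'n network" where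
  "restr g S = {l \<in> g. l \<subseteq> S}"

definition adj :: "'n network \<Rightarrow> ('n \<times> 'n) set" where
  "adj g = {(i, j). i \<noteq> j \<and> {i, j} \<in> g}"

definition comp_of :: "'n network \<Rightarrow> 'n \<Rightarrow> 'n network" where
  "comp_of g i = {l \<in> g. \<exists>j \<in> l. (i, j) \<in> (adj g)\<^sup>*}"

definition components :: "'n network \<Rightarrow> 'n network set" where
  "components g = {comp_of g i | i. i \<in> players g}"

definition is_prob :: "('n network \<Rightarrow> real) \<Rightarrow> bool" where
  "is_prob \<rho> \<longleftrightarrow> (\<forall>g. 0 \<le> \<rho> g \<and> \<rho> g \<le> 1) \<and> (\<forall>g. g \<notin> networks \<longrightarrow> \<rho> g = 0)
     \<and> (\<Sum>g\<in>networks. \<rho> g) = 1"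

definition support :: "('n network \<Rightarrow> real) \<Rightarrow> 'n network set" where
  "support \<rho> = {g. \<rho> g > 0}"

definition extent :: "('n network \<Rightarrow> real) \<Rightarrow> 'n network" where
  "extent \<rho> = \<Union>(support \<rho>)"

definition restrict_prob :: "('n network \<Rightarrow> real) \<Rightarrow> 'n network \<Rightarrow> ('n network \<Rightarrow> real)" where
  "restrict_prob \<rho> g = (\<lambda>h. if h \<subseteq> g then (\<Sum>h'\<in>Pow (gN - g). \<rho> (h \<union> h')) else 0)"

definition delete_link :: "('n network \<Rightarrow> real) \<Rightarrow> 'n set \<Rightarrow> ('n network \<Rightarrow> real)" where
  "delete_link \<rho> l = restrict_prob \<rho> (gN - {l})"

definition is_game :: "('n network \<Rightarrow> real) \<Rightarrow> bool" where
  "is_game v \<longleftrightarrow> v {} = 0"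

definition component_additive :: "('n network \<Rightarrow> real) \<Rightarrow> bool" where
  "component_additive v \<longleftrightarrow> (\<forall>g\<in>networks. v g = (\<Sum>h\<in>components g. v h))"

type_synonym 'n rule = "('n network \<Rightarrow> real) \<Rightarrow> ('n network \<Rightarrow> real) \<Rightarrow> 'n \<Rightarrow> real"

definition allocation_rule :: "('n::finite) rule \<Rightarrow> bool" where
  "allocation_rule \<Psi> \<longleftrightarrow> (\<forall>v \<rho>. is_game v \<longrightarrow> is_prob \<rho> \<longrightarrow>
      (\<forall>i \<in> isolated (extent \<rho>). \<Psi> v \<rho> i = 0))"

definition component_balanced_at :: "'n rule \<Rightarrow> ('n network \<Rightarrow> real) \<Rightarrow> ('n network \<Rightarrow> real) \<Rightarrow> bool" where
  "component_balanced_at \<Psi> v \<rho> \<longleftrightarrow> (\<forall>h \<in> components (extent \<rho>).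
      (\<Sum>i\<in>players h. \<Psi> v \<rho> i) = (\<Sum>g\<in>support \<rho>. \<rho> g * v (g \<inter> h)))"

definition equal_bargaining_at :: "'n rule \<Rightarrow> ('n network \<Rightarrow> real) \<Rightarrow> ('n network \<Rightarrow> real) \<Rightarrow> bool" where
  "equal_bargaining_at \<Psi> v \<rho> \<longleftrightarrow> (\<forall>i j. i \<noteq> j \<longrightarrow> {i, j} \<in> extent \<rho> \<longrightarrow>
      \<Psi> v \<rho> i - \<Psi> v (delete_link \<rho> {i, j}) i = \<Psi> v \<rho> j - \<Psi> v (delete_link \<rho> {i, j}) j)"

definition myerson :: "('n::finite network \<Rightarrow> real) \<Rightarrow> 'n network \<Rightarrow> 'n \<Rightarrow> real" where
  "myerson v g i = (\<Sum>S\<in>Pow (UNIV - {i}).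
      (fact (card S) * fact (card (UNIV :: 'n set) - card S - 1) / fact (card (UNIV :: 'n set)))
      * (v (restr g (S \<union> {i})) - v (restr g S)))"

definition expected_myerson :: "('n::finite) rule" where
  "expected_myerson v \<rho> i = (\<Sum>g\<in>networks. \<rho> g * myerson v g i)"

definition D :: "(('n network \<Rightarrow> real) \<times> ('n network \<Rightarrow> real)) set" where
  "D = {(v, \<rho>). is_game v \<and> is_prob \<rho> \<and> component_additive v}"

end

theory Submission
  imports Defs
begin

text \<open>The Myerson value of a network g is the Shapley value of the set function
  S \<mapsto> v (g|S). It is therefore efficient, vanishes on players without links, and
  removing a link ij changes it by the same amount for i and for j, since the two set
  functions differ only on coalitions containing both i and j. Averaging over \<rho>, the last
  property becomes equal bargaining power of the expected Myerson value. For component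
  balance, component additivity splits v (g|S) along a component h of the extent, so
  the players of h receive exactly v (g \<inter> h) in every network g.

  Uniqueness is by induction on the number of links of the extent. For a link ij, the
  restriction of \<rho> to networks without ij has a smaller extent, so any rule with both
  properties agrees there with the expected Myerson value; equal bargaining power then
  makes the difference of the two rules equal at i and j. The difference is thus constant
  on every component, and component balance forces that constant to be 0.\<close>

section \<open>Shapley value of a set function\<close>

definition shapley_weight :: "nat \<Rightarrow> nat \<Rightarrow> real" where
  "shapley_weight n s = fact s * fact (n - s - 1) / fact n"

definition shapley :: "('n::finite set \<Rightarrow> real) \<Rightarrow> 'n \<Rightarrow> real" where
  "shapley u i = (\<Sum>S\<in>Pow (UNIV - {i}).
     shapley_weight (card (UNIV :: 'n set)) (card S) * (u (insert i S) - u S))"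

lemma sum_Pow_Diff_insert_eq_sum_mem:
  fixes i :: "'n::finite"
  shows "(\<Sum>S\<in>Pow (UNIV - {i}). f (insert i S)) = (\<Sum>T | i \<in> T. f T)"
  by (rule sum.reindex_bij_witness[of _ "\<lambda>T. T - {i}" "insert i"]) auto

lemma sum_Pow_Diff_eq_sum_not_mem:
  fixes i :: "'n::finite"
  shows "(\<Sum>S\<in>Pow (UNIV - {i}). f S) = (\<Sum>T | i \<notin> T. f T)"
  by (rule sum.cong) auto

lemma sum_sum_Pow_Diff_insert:
  fixes f :: "'n::finite set \<Rightarrow> real"
  shows "(\<Sum>i\<in>UNIV. \<Sum>S\<in>Pow (UNIV - {i}). f (insert i S)) = (\<Sum>T\<in>UNIV. card T * f T)"
proof -
  have "(\<Sum>i\<in>UNIV. \<Sum>S\<in>Pow (UNIV - {i}). f (insert i S))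
      = (\<Sum>i\<in>UNIV. \<Sum>T\<in>UNIV. if i \<in> T then f T else 0)"
    by (simp add: sum_Pow_Diff_insert_eq_sum_mem sum.If_cases Int_def)
  also have "\<dots> = (\<Sum>T\<in>UNIV. card T * f T)"
    by (subst sum.swap) (simp add: sum.If_cases)
  finally show ?thesis .
qed

lemma sum_sum_Pow_Diff:
  fixes f :: "'n::finite set \<Rightarrow> real"
  shows "(\<Sum>i\<in>UNIV. \<Sum>S\<in>Pow (UNIV - {i}). f S) = (\<Sum>T\<in>UNIV. (card (UNIV :: 'n set) - card T) * f T)"
proof -
  have "(\<Sum>i\<in>UNIV. \<Sum>S\<in>Pow (UNIV - {i}). f S)
      = (\<Sum>i\<in>UNIV. \<Sum>T\<in>UNIV. if i \<notin> T then f T else 0)"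
    by (simp add: sum_Pow_Diff_eq_sum_not_mem sum.If_cases Int_def)
  also have "\<dots> = (\<Sum>T\<in>UNIV. card (- T) * f T)"
    by (subst sum.swap) (simp add: sum.If_cases Compl_eq)
  finally show ?thesis by (simp add: Compl_eq_Diff_UNIV card_Diff_subset)
qed

lemma shapley_weight_telescope:
  assumes "t \<le> n"
  shows "real t * shapley_weight n (t - 1) - real (n - t) * shapley_weight n t
    = (if t = n then 1 else 0) - (if t = 0 then 1 else 0)"
proof (cases "0 < t \<and> t < n")
  case True
  then obtain k m where "t = Suc k" "n - t = Suc m" by (metis Suc_diff_Suc gr0_conv_Suc)
  then show ?thesis using True by (simp add: shapley_weight_def)
next
  case False
  show ?thesis
  proof (cases "n = 0")
    case False
    then obtain m where "n = Suc m" by (metis not0_implies_Suc)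
    moreover have "t = 0 \<or> t = n" using \<open>\<not> (0 < t \<and> t < n)\<close> assms by linarith
    ultimately show ?thesis by (auto simp: shapley_weight_def)
  qed (use assms in simp)
qed

lemma shapley_efficient:
  fixes u :: "'n::finite set \<Rightarrow> real"
  shows "(\<Sum>i\<in>UNIV. shapley u i) = u UNIV - u {}"
proof -
  define n where "n = card (UNIV :: 'n set)"
  define w where "w T = shapley_weight n (card T)" for T :: "'n set"
  have "(\<Sum>i\<in>UNIV. shapley u i)
      = (\<Sum>i\<in>UNIV. \<Sum>S\<in>Pow (UNIV - {i}). (\<lambda>T. shapley_weight n (card T - 1) * u T) (insert i S))
        - (\<Sum>i\<in>UNIV. \<Sum>S\<in>Pow (UNIV - {i}). w S * u S)"
    unfolding shapley_def n_def w_def sum_subtractf[symmetric] right_diff_distrib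
    by (intro sum.cong refl) (auto simp: subset_iff card_insert_if)
  also have "\<dots> = (\<Sum>T\<in>UNIV. (card T * shapley_weight n (card T - 1) - (n - card T) * w T) * u T)"
    using sum_sum_Pow_Diff_insert[of "\<lambda>T. shapley_weight n (card T - 1) * u T"]
      sum_sum_Pow_Diff[of "\<lambda>S. w S * u S"]
    by (simp add: n_def sum_subtractf algebra_simps)
  also have "\<dots> = (\<Sum>T\<in>UNIV. (if T = UNIV then u T else 0) - (if T = {} then u T else 0))"
  proof (intro sum.cong refl)
    fix T :: "'n set"
    have "card T \<le> n" and "card T = n \<longleftrightarrow> T = UNIV"
      using card_subset_eq[of UNIV T] by (auto simp: n_def card_mono)
    then show "(card T * shapley_weight n (card T - 1) - (n - card T) * w T) * u T
        = (if T = UNIV then u T else 0) - (if T = {} then u T else 0)"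
      using shapley_weight_telescope[of "card T" n] by (simp add: w_def)
  qed
  also have "\<dots> = u UNIV - u {}"
    by (simp add: sum_subtractf)
  finally show ?thesis .
qed

lemma shapley_null_player:
  assumes "\<And>S. u (insert i S) = u S"
  shows "shapley u i = 0"
  by (simp add: shapley_def assms)

lemma shapley_add:
  "shapley (\<lambda>S. u S + u' S) i = shapley u i + shapley u' i"
  unfolding shapley_def sum.distrib[symmetric] by (simp add: algebra_simps)

lemma shapley_diff_sym:
  fixes u u' :: "'n::finite set \<Rightarrow> real"
  assumes agree: "\<And>S. \<not> {i, j} \<subseteq> S \<Longrightarrow> u S = u' S"
  shows "shapley u i - shapley u' i = shapley u j - shapley u' j"
proof -
  define n where "n = card (UNIV :: 'n set)"
  define d where "d S = u S - u' S" for S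
  have "shapley u a - shapley u' a
      = (\<Sum>T | {i, j} \<subseteq> T. shapley_weight n (card T - 1) * d T)" if a: "a \<in> {i, j}" for a
  proof -
    have "shapley u a - shapley u' a
        = (\<Sum>S\<in>Pow (UNIV - {a}). shapley_weight n (card S) * (d (insert a S) - d S))"
      unfolding shapley_def n_def d_def by (simp add: sum_subtractf[symmetric] algebra_simps)
    also have "\<dots> = (\<Sum>S\<in>Pow (UNIV - {a}).
                       (\<lambda>T. shapley_weight n (card T - 1) * d T) (insert a S))"
    proof (intro sum.cong refl)
      fix S assume "S \<in> Pow (UNIV - {a})"
      then have "a \<notin> S" by blast
      then have "d S = 0" and "card (insert a S) - 1 = card S"
        using a agree by (auto simp: d_def)
      then show "shapley_weight n (card S) * (d (insert a S) - d S)
          = shapley_weight n (card (insert a S) - 1) * d (insert a S)" by simp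
    qed
    also have "\<dots> = (\<Sum>T | a \<in> T. shapley_weight n (card T - 1) * d T)"
      by (rule sum_Pow_Diff_insert_eq_sum_mem)
    also have "\<dots> = (\<Sum>T | {i, j} \<subseteq> T. shapley_weight n (card T - 1) * d T)"
      using a agree by (intro sum.mono_neutral_right) (auto simp: d_def)
    finally show ?thesis .
  qed
  then show ?thesis by simp
qed

section \<open>Players and the Myerson value\<close>

lemma mem_players_iff: "a \<in> players g \<longleftrightarrow> (\<exists>b. b \<noteq> a \<and> {a, b} \<in> g)"
  by (auto simp: players_def Nbrs_def insert_commute)

lemma players_eq_Union:
  assumes "g \<subseteq> gN"
  shows "players g = \<Union>g"
proof
  show "players g \<subseteq> \<Union>g" by (auto simp: players_def Nbrs_def)
  show "\<Union>g \<subseteq> players g"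
  proof
    fix a assume "a \<in> \<Union>g"
    then obtain l where "l \<in> g" "a \<in> l" by blast
    moreover from \<open>l \<in> g\<close> obtain x y where "x \<noteq> y" "l = {x, y}"
      using assms by (auto simp: gN_def is_link_def)
    ultimately have "x \<noteq> y" "{x, y} \<in> g" "a = x \<or> a = y" by auto
    then show "a \<in> players g"
      by (auto simp: players_def Nbrs_def insert_commute)
  qed
qed

lemma players_mono: "g \<subseteq> g' \<Longrightarrow> players g \<subseteq> players g'"
  by (auto simp: players_def Nbrs_def)

lemma players_Un: "players (B \<union> C) = players B \<union> players C"
  by (auto simp: players_def Nbrs_def)

lemma myerson_eq_shapley: "myerson v g = shapley (\<lambda>S. v (restr g S))"
  by (simp add: fun_eq_iff myerson_def shapley_def shapley_weight_def)

lemma myerson_nonplayer: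
  assumes "g \<subseteq> gN" and "i \<notin> players g"
  shows "myerson v g i = 0"
proof -
  have "restr g (insert i S) = restr g S" for S
    using assms by (auto simp: restr_def players_eq_Union)
  then show ?thesis
    by (simp add: myerson_eq_shapley shapley_null_player)
qed

lemma myerson_efficient:
  assumes "g \<subseteq> gN"
  shows "(\<Sum>i\<in>UNIV. myerson v g i) = v g - v {}"
proof -
  have "restr g UNIV = g" and "restr g {} = {}"
    using assms by (auto simp: restr_def gN_def is_link_def)
  then show ?thesis
    by (simp add: myerson_eq_shapley shapley_efficient)
qed

lemma myerson_fair:
  "myerson v g i - myerson v (g - {{i, j}}) i = myerson v g j - myerson v (g - {{i, j}}) j"
proof -
  have "restr g S = restr (g - {{i, j}}) S" if "\<not> {i, j} \<subseteq> S" for S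
    using that by (auto simp: restr_def)
  then show ?thesis
    unfolding myerson_eq_shapley by (intro shapley_diff_sym) simp
qed

section \<open>Components\<close>

lemma adj_Un: "adj (B \<union> C) = adj B \<union> adj C"
  by (auto simp: adj_def)

lemma adj_subset_players: "adj g \<subseteq> players g \<times> players g"
proof (rule subrelI)
  fix a b assume "(a, b) \<in> adj g"
  then have "a \<noteq> b" "{a, b} \<in> g" "{b, a} \<in> g" by (auto simp: adj_def insert_commute)
  then show "(a, b) \<in> players g \<times> players g" by (auto simp: mem_players_iff)
qed

lemma rtrancl_Un_separated:
  assumes "Range R \<subseteq> A" and "Domain S \<inter> A = {}" and "x \<in> A"
    and "(x, y) \<in> (R \<union> S)\<^sup>*"
  shows "(x, y) \<in> R\<^sup>*"
proof -
  from assms(4) have "(x, y) \<in> R\<^sup>* \<and> y \<in> A"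
  proof (induction rule: rtrancl_induct)
    case (step y z)
    then have "(y, z) \<in> R" using assms(2) by blast
    then show ?case using step.IH assms(1) by (blast intro: rtrancl_into_rtrancl)
  qed (use assms(3) in simp)
  then show ?thesis ..
qed

lemma comp_of_subset: "comp_of g k \<subseteq> g"
  by (auto simp: comp_of_def)

lemma comp_of_nonempty: "i \<in> players g \<Longrightarrow> comp_of g i \<noteq> {}"
  by (auto simp: mem_players_iff comp_of_def)

lemma mem_players_comp_of_self: "i \<in> players g \<Longrightarrow> i \<in> players (comp_of g i)"
  by (auto simp: mem_players_iff comp_of_def)

lemma comp_of_Un:
  assumes B: "B \<subseteq> gN" and C: "C \<subseteq> gN" and disj: "players B \<inter> players C = {}"
    and i: "i \<in> players B"
  shows "comp_of (B \<union> C) i = comp_of B i"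
proof -
  have reach: "(i, j) \<in> (adj B)\<^sup>* \<and> j \<in> players B" if "(i, j) \<in> (adj (B \<union> C))\<^sup>*" for j
  proof -
    have "Range (adj B) \<subseteq> players B" and "Domain (adj C) \<inter> players B = {}"
      using adj_subset_players[of B] adj_subset_players[of C] disj by auto
    then have "(i, j) \<in> (adj B)\<^sup>*"
      using rtrancl_Un_separated i that by (metis adj_Un)
    moreover from this have "j = i \<or> j \<in> Range (adj B)"
      by (blast elim: rtranclE)
    ultimately show ?thesis using i adj_subset_players[of B] by blast
  qed
  have "(adj B)\<^sup>* \<subseteq> (adj (B \<union> C))\<^sup>*"
    by (simp add: adj_Un rtrancl_mono)
  moreover have "l \<notin> C" if "j \<in> l" "j \<in> players B" for l j
    using that disj C by (auto simp: players_eq_Union)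
  ultimately show ?thesis
    using reach unfolding comp_of_def by blast
qed

lemma components_Un:
  assumes "B \<subseteq> gN" and "C \<subseteq> gN" and disj: "players B \<inter> players C = {}"
  shows "components (B \<union> C) = components B \<union> components C"
proof -
  have "comp_of (B \<union> C) i = comp_of B i" if "i \<in> players B" for i
    using comp_of_Un[OF assms that] .
  moreover have "comp_of (B \<union> C) i = comp_of C i" if "i \<in> players C" for i
    using comp_of_Un[of C B] assms that by (simp add: Int_commute Un_commute)
  ultimately show ?thesis
    unfolding components_def players_Un by blast
qed

lemma component_additive_Un:
  fixes B C :: "'n::finite network"
  assumes ca: "component_additive v" and B: "B \<subseteq> gN" and C: "C \<subseteq> gN"
    and disj: "players B \<inter> players C = {}"
  shows "v (B \<union> C) = v B + v C"
proof -
  have "B \<inter> C = {}"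
    using B C disj by (auto simp: players_eq_Union gN_def is_link_def)
  moreover have "h \<noteq> {} \<and> h \<subseteq> g" if "h \<in> components g" for h g :: "'n network"
    using that comp_of_subset[of g] comp_of_nonempty[of _ g] by (auto simp: components_def)
  ultimately have "components B \<inter> components C = {}"
    by blast
  moreover have "B \<in> networks" "C \<in> networks" "B \<union> C \<in> networks"
    using B C by (auto simp: networks_def)
  ultimately show ?thesis
    using ca components_Un[OF B C disj]
    by (simp add: component_additive_def sum.union_disjoint)
qed

lemma reachable_if_mem_comp_of:
  assumes E: "E \<subseteq> gN" and l: "l \<in> comp_of E k" and a: "a \<in> l"
  shows "(k, a) \<in> (adj E)\<^sup>*"
proof -
  from l obtain j where lE: "l \<in> E" and j: "j \<in> l" and kj: "(k, j) \<in> (adj E)\<^sup>*"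
    by (auto simp: comp_of_def)
  from E lE obtain x y where "x \<noteq> y" "l = {x, y}"
    by (auto simp: gN_def is_link_def)
  then have "a = j \<or> (j, a) \<in> adj E"
    using lE j a by (cases "a = j") (auto simp: adj_def insert_commute)
  with kj show ?thesis by (auto intro: rtrancl_into_rtrancl)
qed

lemma players_comp_of_disjoint:
  assumes E: "E \<subseteq> gN" and g: "g \<subseteq> E"
  shows "players (comp_of E k) \<inter> players (g - comp_of E k) = {}"
proof -
  have False if "l \<in> comp_of E k" "l' \<in> g - comp_of E k" "a \<in> l" "a \<in> l'" for l l' a
    using reachable_if_mem_comp_of[OF E that(1,3)] that(2,4) g by (auto simp: comp_of_def)
  moreover have "comp_of E k \<subseteq> gN" and "g - comp_of E k \<subseteq> gN"
    using E g comp_of_subset[of E k] by auto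
  ultimately show ?thesis
    by (auto simp only: players_eq_Union)
qed

lemma eq_on_players_comp_of:
  assumes E: "E \<subseteq> gN" and link: "\<And>i j. i \<noteq> j \<Longrightarrow> {i, j} \<in> E \<Longrightarrow> f i = f j"
    and a: "a \<in> players (comp_of E k)"
  shows "f a = f k"
proof -
  have "comp_of E k \<subseteq> gN" using E comp_of_subset[of E k] by blast
  then obtain l where "l \<in> comp_of E k" "a \<in> l" using a by (auto simp: players_eq_Union)
  then have "(k, a) \<in> (adj E)\<^sup>*" by (rule reachable_if_mem_comp_of[OF E])
  then show ?thesis
    by (induction rule: rtrancl_induct) (auto simp: adj_def dest: link)
qed

lemma sum_myerson_comp_of:
  fixes g E :: "'n::finite network"
  assumes ca: "component_additive v" and game: "is_game v" and E: "E \<subseteq> gN" and g: "g \<subseteq> E"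
  shows "(\<Sum>a\<in>players (comp_of E k). myerson v g a) = v (g \<inter> comp_of E k)"
proof -
  define h where "h = comp_of E k"
  have gN: "g \<inter> h \<subseteq> gN" "g - h \<subseteq> gN" using E g by auto
  have disj: "players h \<inter> players (g - h) = {}"
    unfolding h_def by (rule players_comp_of_disjoint[OF E g])
  have "v (restr g S) = v (restr (g \<inter> h) S) + v (restr (g - h) S)" for S
  proof -
    have "restr g S = restr (g \<inter> h) S \<union> restr (g - h) S" by (auto simp: restr_def)
    moreover have "restr (g \<inter> h) S \<subseteq> gN" "restr (g - h) S \<subseteq> gN"
      using gN by (auto simp: restr_def)
    moreover have "players (restr (g \<inter> h) S) \<subseteq> players h"
      and "players (restr (g - h) S) \<subseteq> players (g - h)"
      by (auto intro!: players_mono simp: restr_def)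
    then have "players (restr (g \<inter> h) S) \<inter> players (restr (g - h) S) = {}"
      using disj by blast
    ultimately show ?thesis
      using component_additive_Un[OF ca] by simp
  qed
  then have split: "myerson v g a = myerson v (g \<inter> h) a + myerson v (g - h) a" for a
    by (simp add: myerson_eq_shapley shapley_add[symmetric])
  have "(\<Sum>a\<in>players h. myerson v g a) = (\<Sum>a\<in>players h. myerson v (g \<inter> h) a)"
    using disj myerson_nonplayer[OF gN(2)] by (intro sum.cong) (auto simp: split)
  also have "\<dots> = (\<Sum>a\<in>UNIV. myerson v (g \<inter> h) a)"
    using myerson_nonplayer[OF gN(1)] players_mono[of "g \<inter> h" h]
    by (intro sum.mono_neutral_left) auto
  also have "\<dots> = v (g \<inter> h)"
    using myerson_efficient[OF gN(1)] game by (simp add: is_game_def)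
  finally show ?thesis by (simp add: h_def)
qed

section \<open>Link deletion in a distribution\<close>

lemma extent_subset_gN: "is_prob \<rho> \<Longrightarrow> extent \<rho> \<subseteq> gN"
  unfolding extent_def support_def networks_def is_prob_def by force

lemma subset_extent_if_nonzero:
  assumes "is_prob \<rho>" and "\<rho> g \<noteq> 0"
  shows "g \<subseteq> extent \<rho>"
proof -
  have "\<rho> g > 0" using assms by (simp add: is_prob_def order_less_le)
  then show ?thesis by (auto simp: extent_def support_def)
qed

lemma delete_link_apply:
  assumes "l \<in> gN"
  shows "delete_link \<rho> l h = (if h \<subseteq> gN - {l} then \<rho> h + \<rho> (insert l h) else 0)"
proof -
  have "Pow (gN - (gN - {l})) = {{}, {l}}" using assms by blast
  then show ?thesis by (simp add: delete_link_def restrict_prob_def)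
qed

lemma sum_delete_link:
  fixes F :: "'n::finite network \<Rightarrow> real"
  assumes l: "l \<in> gN"
  shows "(\<Sum>g\<in>networks. delete_link \<rho> l g * F g) = (\<Sum>g\<in>networks. \<rho> g * F (g - {l}))"
proof -
  define P where "P = Pow (gN - {l})"
  have networks: "networks = P \<union> insert l ` P"
    using l Pow_insert[of l "gN - {l}"] by (simp add: networks_def P_def insert_absorb)
  have disj: "P \<inter> insert l ` P = {}" and inj: "inj_on (insert l) P"
    by (auto simp: P_def inj_on_def)
  have "(\<Sum>g\<in>networks. delete_link \<rho> l g * F g)
      = (\<Sum>g\<in>networks. if g \<in> P then (\<rho> g + \<rho> (insert l g)) * F g else 0)"
    by (intro sum.cong) (auto simp: delete_link_apply[OF l] P_def)
  also have "\<dots> = (\<Sum>g\<in>P. (\<rho> g + \<rho> (insert l g)) * F g)"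
    by (simp add: sum.If_cases networks Int_absorb1)
  also have "\<dots> = (\<Sum>g\<in>P. \<rho> g * F (g - {l})) + (\<Sum>g\<in>P. \<rho> (insert l g) * F (insert l g - {l}))"
    unfolding sum.distrib[symmetric]
  proof (intro sum.cong refl)
    fix g assume "g \<in> P"
    then have "g - {l} = g" and "insert l g - {l} = g" by (auto simp: P_def)
    then show "(\<rho> g + \<rho> (insert l g)) * F g
        = \<rho> g * F (g - {l}) + \<rho> (insert l g) * F (insert l g - {l})"
      by (simp add: algebra_simps)
  qed
  also have "\<dots> = (\<Sum>g\<in>networks. \<rho> g * F (g - {l}))"
    by (simp add: networks sum.union_disjoint disj sum.reindex inj)
  finally show ?thesis .
qed

lemma is_prob_delete_link:
  fixes \<rho> :: "'n::finite network \<Rightarrow> real"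
  assumes p: "is_prob \<rho>" and l: "l \<in> gN"
  shows "is_prob (delete_link \<rho> l)"
proof -
  have nonneg: "0 \<le> \<rho> g" for g using p by (simp add: is_prob_def)
  have total: "(\<Sum>g\<in>networks. \<rho> g) = 1" using p by (simp add: is_prob_def)
  have "delete_link \<rho> l h \<le> 1" for h
  proof (cases "h \<subseteq> gN - {l}")
    case True
    then have "h \<noteq> insert l h" and "{h, insert l h} \<subseteq> networks"
      using l by (auto simp: networks_def)
    then have "\<rho> h + \<rho> (insert l h) \<le> (\<Sum>g\<in>networks. \<rho> g)"
      using sum_mono2[of networks "{h, insert l h}" \<rho>] nonneg by simp
    then show ?thesis using True total by (simp add: delete_link_apply[OF l])
  qed (simp add: delete_link_apply[OF l])
  moreover have "(\<Sum>g\<in>networks. delete_link \<rho> l g) = 1"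
    using sum_delete_link[OF l, of \<rho> "\<lambda>_. 1"] total by simp
  moreover have "0 \<le> delete_link \<rho> l g" for g
    using nonneg by (simp add: delete_link_apply[OF l])
  moreover have "delete_link \<rho> l g = 0" if "g \<notin> networks" for g
    using that by (auto simp: delete_link_apply[OF l] networks_def)
  ultimately show ?thesis by (simp add: is_prob_def)
qed

lemma extent_delete_link:
  assumes p: "is_prob \<rho>" and l: "l \<in> gN"
  shows "extent (delete_link \<rho> l) \<subseteq> extent \<rho> - {l}"
proof
  fix x assume "x \<in> extent (delete_link \<rho> l)"
  then obtain h where h: "x \<in> h" "delete_link \<rho> l h > 0"
    by (auto simp: extent_def support_def)
  then have "h \<subseteq> gN - {l}" and "\<rho> h + \<rho> (insert l h) > 0"
    by (auto simp: delete_link_apply[OF l] split: if_splits)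
  moreover have "0 \<le> \<rho> h" "0 \<le> \<rho> (insert l h)" using p by (simp_all add: is_prob_def)
  ultimately have "\<rho> h > 0 \<or> \<rho> (insert l h) > 0" by linarith
  then have "x \<in> extent \<rho>" using h(1) by (auto simp: extent_def support_def)
  then show "x \<in> extent \<rho> - {l}" using h(1) \<open>h \<subseteq> gN - {l}\<close> by blast
qed

section \<open>The expected Myerson value\<close>

lemma expected_myerson_isolated:
  fixes \<rho> :: "'n::finite network \<Rightarrow> real"
  assumes p: "is_prob \<rho>" and i: "i \<in> isolated (extent \<rho>)"
  shows "expected_myerson v \<rho> i = 0"
  unfolding expected_myerson_def
proof (intro sum.neutral ballI)
  fix g :: "'n network" assume g: "g \<in> networks"
  show "\<rho> g * myerson v g i = 0"
  proof (cases "\<rho> g = 0")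
    case False
    then have "players g \<subseteq> players (extent \<rho>)"
      using subset_extent_if_nonzero[OF p] players_mono by blast
    then have "i \<notin> players g" using i by (auto simp: isolated_def)
    with g show ?thesis by (simp add: myerson_nonplayer networks_def)
  qed simp
qed

lemma expected_myerson_component_balanced:
  fixes \<rho> :: "'n::finite network \<Rightarrow> real"
  assumes p: "is_prob \<rho>" and ca: "component_additive v" and game: "is_game v"
  shows "component_balanced_at expected_myerson v \<rho>"
  unfolding component_balanced_at_def
proof
  fix h assume "h \<in> components (extent \<rho>)"
  then obtain k where h: "h = comp_of (extent \<rho>) k" by (auto simp: components_def)
  have "(\<Sum>a\<in>players h. expected_myerson v \<rho> a)
      = (\<Sum>g\<in>networks. \<rho> g * (\<Sum>a\<in>players h. myerson v g a))"
    unfolding expected_myerson_def by (simp add: sum_distrib_left sum.swap[of _ "players h"])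
  also have "\<dots> = (\<Sum>g\<in>networks. \<rho> g * v (g \<inter> h))"
  proof (intro sum.cong refl)
    fix g :: "'n network"
    show "\<rho> g * (\<Sum>a\<in>players h. myerson v g a) = \<rho> g * v (g \<inter> h)"
      using sum_myerson_comp_of[OF ca game extent_subset_gN[OF p]
          subset_extent_if_nonzero[OF p], of g k] h
      by (cases "\<rho> g = 0") auto
  qed
  also have "\<dots> = (\<Sum>g\<in>support \<rho>. \<rho> g * v (g \<inter> h))"
  proof (rule sum.mono_neutral_right)
    show "support \<rho> \<subseteq> networks"
      using p by (auto simp: support_def is_prob_def)
    show "\<forall>g\<in>networks - support \<rho>. \<rho> g * v (g \<inter> h) = 0"
      using p by (auto simp: support_def is_prob_def order_le_less)
  qed auto
  finally show "(\<Sum>a\<in>players h. expected_myerson v \<rho> a) = (\<Sum>g\<in>support \<rho>. \<rho> g * v (g \<inter> h))" .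
qed

lemma expected_myerson_equal_bargaining:
  "equal_bargaining_at (expected_myerson :: 'n::finite rule) v \<rho>"
  unfolding equal_bargaining_at_def
proof (intro allI impI)
  fix i j :: 'n assume "i \<noteq> j"
  then have l: "{i, j} \<in> gN" by (auto simp: gN_def is_link_def)
  have "expected_myerson v \<rho> a - expected_myerson v (delete_link \<rho> {i, j}) a
      = (\<Sum>g\<in>networks. \<rho> g * (myerson v g a - myerson v (g - {{i, j}}) a))" for a
    unfolding expected_myerson_def sum_delete_link[OF l]
    by (simp add: sum_subtractf[symmetric] algebra_simps)
  then show "expected_myerson v \<rho> i - expected_myerson v (delete_link \<rho> {i, j}) i
      = expected_myerson v \<rho> j - expected_myerson v (delete_link \<rho> {i, j}) j"
    using myerson_fair[of v _ i j] by simp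
qed

lemma eq_expected_myerson_if_diff_constant_on_links:
  fixes \<Psi> :: "'n::finite rule"
  assumes alloc: "allocation_rule \<Psi>" and "(v, \<rho>) \<in> D"
    and balanced: "component_balanced_at \<Psi> v \<rho>"
    and link: "\<And>i j. i \<noteq> j \<Longrightarrow> {i, j} \<in> extent \<rho> \<Longrightarrow>
      \<Psi> v \<rho> i - expected_myerson v \<rho> i = \<Psi> v \<rho> j - expected_myerson v \<rho> j"
  shows "\<Psi> v \<rho> = expected_myerson v \<rho>"
proof
  fix i
  define \<Phi> where "\<Phi> a = \<Psi> v \<rho> a - expected_myerson v \<rho> a" for a
  have p: "is_prob \<rho>" and game: "is_game v" and ca: "component_additive v"
    using \<open>(v, \<rho>) \<in> D\<close> by (auto simp: D_def)
  show "\<Psi> v \<rho> i = expected_myerson v \<rho> i"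
  proof (cases "i \<in> players (extent \<rho>)")
    case False
    then show ?thesis
      using alloc game p expected_myerson_isolated[OF p]
      by (simp add: allocation_rule_def isolated_def)
  next
    case True
    define h where "h = comp_of (extent \<rho>) i"
    have "h \<in> components (extent \<rho>)" using True by (auto simp: h_def components_def)
    then have "(\<Sum>a\<in>players h. \<Psi> v \<rho> a) = (\<Sum>a\<in>players h. expected_myerson v \<rho> a)"
      using balanced expected_myerson_component_balanced[OF p ca game]
      by (simp add: component_balanced_at_def)
    then have "0 = (\<Sum>a\<in>players h. \<Phi> a)" by (simp add: \<Phi>_def sum_subtractf)
    also have "\<dots> = (\<Sum>a\<in>players h. \<Phi> i)"
      using eq_on_players_comp_of[where f = \<Phi>, OF extent_subset_gN[OF p] link[folded \<Phi>_def]]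
      by (simp add: h_def)
    also have "\<dots> = card (players h) * \<Phi> i"
      by simp
    finally show ?thesis
      using mem_players_comp_of_self[OF True] by (auto simp: \<Phi>_def h_def)
  qed
qed

lemma eq_expected_myerson_if_balanced_bargaining:
  fixes \<Psi> :: "'n::finite rule"
  assumes alloc: "allocation_rule \<Psi>"
    and axioms: "\<forall>(v, \<rho>) \<in> D. component_balanced_at \<Psi> v \<rho> \<and> equal_bargaining_at \<Psi> v \<rho>"
    and "(v, \<rho>) \<in> D"
  shows "\<Psi> v \<rho> = expected_myerson v \<rho>"
  using \<open>(v, \<rho>) \<in> D\<close>
proof (induction "card (extent \<rho>)" arbitrary: \<rho> rule: less_induct)
  case less
  then have p: "is_prob \<rho>" and game: "is_game v" and ca: "component_additive v"
    by (auto simp: D_def)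
  have "\<Psi> v \<rho> i - expected_myerson v \<rho> i = \<Psi> v \<rho> j - expected_myerson v \<rho> j"
    if ij: "i \<noteq> j" "{i, j} \<in> extent \<rho>" for i j
  proof -
    define \<rho>' where "\<rho>' = delete_link \<rho> {i, j}"
    have l: "{i, j} \<in> gN" using ij by (auto simp: gN_def is_link_def)
    have D': "(v, \<rho>') \<in> D"
      using game ca is_prob_delete_link[OF p l] by (simp add: D_def \<rho>'_def)
    have "extent \<rho>' \<subset> extent \<rho>"
      using extent_delete_link[OF p l] ij by (auto simp: \<rho>'_def)
    then have "card (extent \<rho>') < card (extent \<rho>)" by (rule psubset_card_mono[rotated]) simp
    then have "\<Psi> v \<rho>' = expected_myerson v \<rho>'" using D' by (rule less.hyps)
    moreover have "\<Psi> v \<rho> i - \<Psi> v \<rho>' i = \<Psi> v \<rho> j - \<Psi> v \<rho>' j"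
      using axioms less.prems ij unfolding equal_bargaining_at_def \<rho>'_def by blast
    moreover have "expected_myerson v \<rho> i - expected_myerson v \<rho>' i
        = expected_myerson v \<rho> j - expected_myerson v \<rho>' j"
      using expected_myerson_equal_bargaining[of v \<rho>] ij
      unfolding equal_bargaining_at_def \<rho>'_def by blast
    ultimately show ?thesis by simp
  qed
  moreover have "component_balanced_at \<Psi> v \<rho>" using axioms less.prems by blast
  ultimately show ?case
    using eq_expected_myerson_if_diff_constant_on_links[OF alloc less.prems] by blast
qed

theorem mainTheorem1:
  shows "(allocation_rule (expected_myerson :: ('n::finite) rule)
          \<and> (\<forall>(v, \<rho>) \<in> (D :: (('n network \<Rightarrow> real) \<times> ('n network \<Rightarrow> real)) set).
               component_balanced_at expected_myerson v \<rho>
             \<and> equal_bargaining_at expected_myerson v \<rho>))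
       \<and> (\<forall>\<Psi> :: 'n rule. allocation_rule \<Psi>
            \<and> (\<forall>(v, \<rho>) \<in> D. component_balanced_at \<Psi> v \<rho> \<and> equal_bargaining_at \<Psi> v \<rho>)
            \<longrightarrow> (\<forall>(v, \<rho>) \<in> D. \<Psi> v \<rho> = expected_myerson v \<rho>))"
proof (intro conjI allI impI)
  show "allocation_rule (expected_myerson :: 'n rule)"
    by (simp add: allocation_rule_def expected_myerson_isolated)
  show "\<forall>(v, \<rho>) \<in> (D :: (('n network \<Rightarrow> real) \<times> ('n network \<Rightarrow> real)) set).
          component_balanced_at expected_myerson v \<rho> \<and> equal_bargaining_at expected_myerson v \<rho>"
    by (auto simp: D_def expected_myerson_component_balanced expected_myerson_equal_bargaining)
  show "\<forall>(v, \<rho>) \<in> D. \<Psi> v \<rho> = expected_myerson v \<rho>"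
    if "allocation_rule \<Psi> \<and> (\<forall>(v, \<rho>) \<in> D. component_balanced_at \<Psi> v \<rho> \<and> equal_bargaining_at \<Psi> v \<rho>)"
    for \<Psi> :: "'n rule"
    using that eq_expected_myerson_if_balanced_bargaining by blast
qed

end
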